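(* Let $N, W, M$ be positive integers, $L=1$, and $\mathbf{w}\in\mathbb{C}^W$ a window such that (i) $\mathbf{w}$ is non-vanishing ($w[n]\neq0$ for $0\le n\le W-1$); (ii) $2\le W\le \frac{N}{2}$; (iii) $4\le M\le N$. Then for almost all non-vanishing $\mathbf{x}_0\in\mathbb{C}^N$ (all $\mathbf{x}_0$ with every entry nonzero, except a Lebesgue-null set), the only $N\times N$ Hermitian positive semidefinite matrix $\mathbf{X}$ satisfying $$\operatorname{trace}(\mathbf{W}_r^\star\mathbf{f}_m\mathbf{f}_m^\star\mathbf{W}_r\mathbf{X})=Z_w[m,r]\quad\text{for all }1\le m\le M,\ 0\le r\le R-1$$ is $\mathbf{X}_0=\mathbf{x}_0\mathbf{x}_0^\star$. In particular, the semidefinite program minimizing $\operatorname{trace}(\mathbf{X})$ subject to these constraints and $\mathbf{X}\succeq0$ has the unique feasible (hence optimal) point $\mathbf{x}_0\mathbf{x}_0^\star$.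
   Context: The window is extended by $w[k]=0$ for $k\notin\{0,\dots,W-1\}$; with $L=1$, $R=\lceil (N+W-1)/L\rceil=N+W-1$. For $0\le r\le R-1$, $\mathbf{W}_r$ is the $N\times N$ diagonal matrix with diagonal entries $w[rL-n]$, $n=0,\dots,N-1$. For integer $m$, $\mathbf{f}_m\in\mathbb{C}^N$ has entries $f_m[n]=e^{i2\pi mn/N}$ (indices modulo $N$), and $\star$ denotes conjugate transpose. The measurements are the STFT magnitudes of $\mathbf{x}_0$: $Z_w[m,r]=|\mathbf{f}_m^\star\mathbf{W}_r\mathbf{x}_0|^2=\big|\sum_{n=0}^{N-1}x_0[n]w[rL-n]e^{-i2\pi mn/N}\big|^2$. *)

theory Defs
  imports "HOL-Analysis.Analysis"
begin

text \<open>Conventions: vectors in C^N are functions nat => complex (only indices < N matter);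
  N x N matrices are functions nat => nat => complex (only indices < N matter).
  Hop size L = 1, so R = N + W - 1.\<close>

definition wext :: "nat \<Rightarrow> (nat \<Rightarrow> complex) \<Rightarrow> int \<Rightarrow> complex" where
  "wext W w k = (if 0 \<le> k \<and> k < int W then w (nat k) else 0)"

definition Wmat :: "nat \<Rightarrow> (nat \<Rightarrow> complex) \<Rightarrow> nat \<Rightarrow> nat \<Rightarrow> nat \<Rightarrow> complex" where
  "Wmat W w r i j = (if i = j then wext W w (int r - int i) else 0)"

definition fcol :: "nat \<Rightarrow> int \<Rightarrow> nat \<Rightarrow> nat \<Rightarrow> complex" where
  "fcol N m n j = (if j = 0 then exp (\<i> * 2 * pi * of_int m * of_nat n / of_nat N) else 0)"

definition mmul :: "nat \<Rightarrow> (nat \<Rightarrow> nat \<Rightarrow> complex) \<Rightarrow> (nat \<Rightarrow> nat \<Rightarrow> complex) \<Rightarrow> nat \<Rightarrow> nat \<Rightarrow> complex" where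
  "mmul K A B i j = (\<Sum>k<K. A i k * B k j)"

definition adj :: "(nat \<Rightarrow> nat \<Rightarrow> complex) \<Rightarrow> nat \<Rightarrow> nat \<Rightarrow> complex" where
  "adj A i j = cnj (A j i)"

definition mtrace :: "nat \<Rightarrow> (nat \<Rightarrow> nat \<Rightarrow> complex) \<Rightarrow> complex" where
  "mtrace N A = (\<Sum>i<N. A i i)"

definition hermitian_psd :: "nat \<Rightarrow> (nat \<Rightarrow> nat \<Rightarrow> complex) \<Rightarrow> bool" where
  "hermitian_psd N X \<longleftrightarrow>
     (\<forall>i<N. \<forall>j<N. X i j = cnj (X j i)) \<and>
     (\<forall>v :: nat \<Rightarrow> complex. 0 \<le> Re (\<Sum>i<N. \<Sum>j<N. cnj (v i) * X i j * v j))"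

text \<open>trace(W_r^* f_m f_m^* W_r X) for N x N matrix X (the product f_m f_m^* has inner dimension 1).\<close>
definition meas_op :: "nat \<Rightarrow> nat \<Rightarrow> (nat \<Rightarrow> complex) \<Rightarrow> int \<Rightarrow> nat \<Rightarrow> (nat \<Rightarrow> nat \<Rightarrow> complex) \<Rightarrow> complex" where
  "meas_op N W w m r X =
     mtrace N (mmul N (mmul N (mmul 1 (mmul N (adj (Wmat W w r)) (fcol N m)) (adj (fcol N m))) (Wmat W w r)) X)"

definition Zw :: "nat \<Rightarrow> nat \<Rightarrow> (nat \<Rightarrow> complex) \<Rightarrow> (nat \<Rightarrow> complex) \<Rightarrow> int \<Rightarrow> nat \<Rightarrow> real" where
  "Zw N W w x0 m r =
     (cmod (\<Sum>n<N. x0 n * wext W w (int r - int n) * exp (- \<i> * 2 * pi * of_int m * of_nat n / of_nat N)))\<^sup>2"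

end

theory Submission
  imports Defs
begin

text \<open>
  Frame r involves x0[0..r] only,
  and x0[r] enters it with weight w[0] \<noteq> 0, so one shows by induction on r that every feasible X
  agrees with x0 x0* on its leading r \<times> r block. Given that block, positive semidefiniteness makes
  the next column a multiple (conj x0[r] + d) x0 of x0 (this uses x0[0] \<noteq> 0), and measurement
  (m, r) becomes 2 Re (h_m d) + |w[0]|^2 e = 0, where e = X[r,r] - |x0[r]|^2 and h_m depends on
  x0[0..r-1] only. If h_2 - h_1 and h_3 - h_1 are linearly independent over the reals, then
  d = e = 0. As functions of x0[r-1] the h_m are affine with slopes conj w[0] w[1] exp(2 pi i m / N),
  so independence fails only when x0[r-1] lies on a certain circle, a null set.
\<close>

lemma nonneg_quadratic_imp_linear_coeff_0:
  fixes a b :: real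
  assumes "\<And>t. 0 \<le> 2 * t * a + t\<^sup>2 * b"
  shows "a = 0"
proof (rule ccontr)
  assume "a \<noteq> 0"
  define t where "t = - a / (\<bar>b\<bar> + 1)"
  have ta: "t * a = - (a\<^sup>2 / (\<bar>b\<bar> + 1))"
    by (simp add: t_def power2_eq_square)
  have "t\<^sup>2 * b \<le> t\<^sup>2 * \<bar>b\<bar>"
    by (simp add: mult_left_mono)
  also have "\<dots> = a\<^sup>2 / (\<bar>b\<bar> + 1) * (\<bar>b\<bar> / (\<bar>b\<bar> + 1))"
    by (simp add: t_def power2_eq_square)
  also have "\<dots> < a\<^sup>2 / (\<bar>b\<bar> + 1)"
    using mult_strict_left_mono[of "\<bar>b\<bar> / (\<bar>b\<bar> + 1)" 1 "a\<^sup>2 / (\<bar>b\<bar> + 1)"] \<open>a \<noteq> 0\<close>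
    by simp
  finally have "t\<^sup>2 * b < a\<^sup>2 / (\<bar>b\<bar> + 1)" .
  moreover have "0 < a\<^sup>2 / (\<bar>b\<bar> + 1)"
    using \<open>a \<noteq> 0\<close> by simp
  ultimately have "2 * t * a + t\<^sup>2 * b < 0"
    using ta by linarith
  then show False
    using assms[of t] by simp
qed

lemma eq_0_if_Re_mult_eq_const:
  fixes a :: "int \<Rightarrow> complex" and c :: real
  assumes same: "\<And>m. m \<in> {1, 2, 3} \<Longrightarrow> Re (a m * d) = c"
    and independent: "Im ((a 2 - a 1) * cnj (a 3 - a 1)) \<noteq> 0"
  shows "d = 0"
proof -
  define p q where "p = a 2 - a 1" and "q = a 3 - a 1"
  have p: "Re (p * d) = 0" and q: "Re (q * d) = 0"
    using same[of 1] same[of 2] same[of 3]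
    by (simp_all only: p_def q_def left_diff_distrib minus_complex.sel) simp_all
  define \<kappa> where "\<kappa> = Im p * Re q - Re p * Im q"
  have "\<kappa> * Re d = Im p * Re (q * d) - Im q * Re (p * d)"
    and "\<kappa> * Im d = Re p * Re (q * d) - Re q * Re (p * d)"
    by (simp_all add: \<kappa>_def algebra_simps)
  then have "\<kappa> * Re d = 0" and "\<kappa> * Im d = 0"
    unfolding p q by simp_all
  moreover have "\<kappa> \<noteq> 0"
    using independent unfolding p_def[symmetric] q_def[symmetric] \<kappa>_def by simp
  ultimately show ?thesis
    by (simp add: complex_eq_iff)
qed

section \<open>Hermitian forms\<close>

definition sesq :: "nat \<Rightarrow> (nat \<Rightarrow> nat \<Rightarrow> complex) \<Rightarrow> (nat \<Rightarrow> complex) \<Rightarrow> (nat \<Rightarrow> complex) \<Rightarrow> complex" where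
  "sesq N X u v = (\<Sum>i<N. \<Sum>j<N. cnj (u i) * X i j * v j)"

lemma hermitian_psd_iff:
  "hermitian_psd N X \<longleftrightarrow> (\<forall>i<N. \<forall>j<N. X i j = cnj (X j i)) \<and> (\<forall>v. 0 \<le> Re (sesq N X v v))"
  by (simp add: hermitian_psd_def sesq_def)

lemma sesq_cong:
  assumes "\<And>i j. i < N \<Longrightarrow> j < N \<Longrightarrow> X i j = Y i j"
  shows "sesq N X u v = sesq N Y u v"
  unfolding sesq_def using assms by (intro sum.cong refl) auto

lemma sesq_diff: "sesq N (\<lambda>i j. X i j - Y i j) u v = sesq N X u v - sesq N Y u v"
  by (simp add: sesq_def algebra_simps sum_subtractf)

lemma sesq_rank_one: "sesq N (\<lambda>i j. x i * cnj (x j)) v v = of_real ((cmod (\<Sum>i<N. cnj (v i) * x i))\<^sup>2)"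
proof -
  have "sesq N (\<lambda>i j. x i * cnj (x j)) v v = (\<Sum>i<N. cnj (v i) * x i) * (\<Sum>j<N. v j * cnj (x j))"
    unfolding sesq_def sum_product by (simp add: mult_ac)
  also have "\<dots> = (\<Sum>i<N. cnj (v i) * x i) * cnj (\<Sum>j<N. cnj (v j) * x j)"
    by simp
  finally show ?thesis
    unfolding complex_norm_square .
qed

lemma sesq_add_scaled:
  "sesq N X (\<lambda>j. v j + t * u j) (\<lambda>j. v j + t * u j)
     = sesq N X v v + cnj t * sesq N X u v + t * sesq N X v u + cnj t * t * sesq N X u u"
  by (simp add: sesq_def algebra_simps sum.distrib sum_distrib_left)

lemma sesq_restrict:
  assumes "r \<le> N" and "\<And>j. r \<le> j \<Longrightarrow> j < N \<Longrightarrow> v j = 0"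
  shows "sesq N X v v = sesq r X v v"
proof -
  have inner: "(\<Sum>j<N. cnj (v i) * X i j * v j) = (\<Sum>j<r. cnj (v i) * X i j * v j)" for i
    using assms by (intro sum.mono_neutral_right) auto
  show ?thesis
    unfolding sesq_def inner using assms by (intro sum.mono_neutral_right) auto
qed

lemma sesq_border:
  assumes "r < N" and "\<And>j. r < j \<Longrightarrow> j < N \<Longrightarrow> v j = 0"
    and "\<And>a b. a < r \<Longrightarrow> b < r \<Longrightarrow> D a b = 0"
  shows "sesq N D v v = (\<Sum>a<r. cnj (v a) * D a r) * v r + cnj (v r) * (\<Sum>b<r. D r b * v b)
                          + cnj (v r) * D r r * v r"
proof -
  have "sesq N D v v = sesq (Suc r) D v v"
    using assms by (intro sesq_restrict) auto
  then show ?thesis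
    using assms(3) by (simp add: sesq_def sum.distrib sum_distrib_left sum_distrib_right algebra_simps)
qed

lemma sesq_cnj_swap:
  assumes "\<And>i j. i < N \<Longrightarrow> j < N \<Longrightarrow> X i j = cnj (X j i)"
  shows "sesq N X v u = cnj (sesq N X u v)"
proof -
  have herm: "cnj (X i j) = X j i" if "i < N" "j < N" for i j
    using assms[OF that(2,1)] by simp
  have "cnj (sesq N X u v) = (\<Sum>i<N. \<Sum>j<N. cnj (v j) * X j i * u i)"
    unfolding sesq_def cnj_sum by (intro sum.cong refl) (simp add: herm mult_ac)
  also have "\<dots> = sesq N X v u"
    unfolding sesq_def by (subst sum.swap) (simp add: mult_ac)
  finally show ?thesis ..
qed

lemma hermitian_psd_kernel:
  assumes psd: "hermitian_psd N X" and null: "Re (sesq N X v v) = 0" and "a < N"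
  shows "(\<Sum>b<N. X a b * v b) = 0"
proof -
  define z where "z = (\<Sum>b<N. X a b * v b)"
  define u where "u = (\<lambda>j. if j = a then z else 0)"
  have herm: "\<And>i j. i < N \<Longrightarrow> j < N \<Longrightarrow> X i j = cnj (X j i)"
    and nonneg: "\<And>v. 0 \<le> Re (sesq N X v v)"
    using psd unfolding hermitian_psd_iff by blast+
  have uv: "sesq N X u v = of_real ((cmod z)\<^sup>2)"
  proof -
    have "sesq N X u v = (\<Sum>i<N. cnj (u i) * (\<Sum>j<N. X i j * v j))"
      by (simp add: sesq_def sum_distrib_left mult.assoc)
    also have "\<dots> = cnj z * z"
      using \<open>a < N\<close> by (simp add: u_def z_def if_distrib if_distribR cong: if_cong)
    also have "\<dots> = of_real ((cmod z)\<^sup>2)"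
      by (subst complex_norm_square) (rule mult.commute)
    finally show ?thesis .
  qed
  have vu: "sesq N X v u = cnj (sesq N X u v)"
    using herm by (rule sesq_cnj_swap)
  have "0 \<le> 2 * t * (cmod z)\<^sup>2 + t\<^sup>2 * Re (sesq N X u u)" for t :: real
  proof -
    have "sesq N X (\<lambda>j. v j + of_real t * u j) (\<lambda>j. v j + of_real t * u j)
          = sesq N X v v + of_real (2 * t * (cmod z)\<^sup>2) + of_real (t\<^sup>2) * sesq N X u u"
      unfolding sesq_add_scaled vu uv
      by (simp add: algebra_simps power2_eq_square)
    then show ?thesis using nonneg[of "\<lambda>j. v j + of_real t * u j"] null by simp
  qed
  then have "(cmod z)\<^sup>2 = 0"
    by (rule nonneg_quadratic_imp_linear_coeff_0)
  then show ?thesis by (simp add: z_def)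
qed

lemma hermitian_psd_column_proportional:
  assumes psd: "hermitian_psd N X" and "r < N" and "x 0 \<noteq> 0"
    and block: "\<And>a b. a < r \<Longrightarrow> b < r \<Longrightarrow> X a b = x a * cnj (x b)"
  obtains c where "\<And>a. a < r \<Longrightarrow> X a r = c * x a"
proof
  fix a assume "a < r"
  have herm: "\<And>i j. i < N \<Longrightarrow> j < N \<Longrightarrow> X i j = cnj (X j i)"
    using psd unfolding hermitian_psd_iff by blast
  have "x a * X 0 r = x 0 * X a r"
  proof (cases "a = 0")
    case False
    txt \<open>v is orthogonal to x on the known block, so v* X v = 0, hence X v = 0; row r of X v is the claim.\<close>
    define v where "v j = (if j = 0 then cnj (x a) else 0) - (if j = a then cnj (x 0) else 0)" for j
    have "sesq N X v v = sesq r X v v"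
      using \<open>a < r\<close> \<open>r < N\<close> by (intro sesq_restrict) (auto simp: v_def)
    also have "\<dots> = sesq r (\<lambda>i j. x i * cnj (x j)) v v"
      by (intro sesq_cong) (simp add: block)
    also have "\<dots> = 0"
      using \<open>a < r\<close> False by (simp add: sesq_rank_one v_def left_diff_distrib sum_subtractf if_distrib[of cnj]
          if_distrib[of "\<lambda>y. y * x _"] cong: if_cong)
    finally have "(\<Sum>b<N. X r b * v b) = 0"
      using \<open>r < N\<close> by (intro hermitian_psd_kernel[OF psd]) simp_all
    then have "X r 0 * cnj (x a) - X r a * cnj (x 0) = 0"
      using \<open>a < r\<close> \<open>r < N\<close> False
      by (simp add: v_def right_diff_distrib sum_subtractf if_distrib[of "\<lambda>y. X r _ * y"] cong: if_cong)
    then have "cnj (x a * X 0 r) = cnj (x 0 * X a r)"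
      using herm[of r 0] herm[of r a] \<open>a < r\<close> \<open>r < N\<close> by (simp add: mult.commute)
    then show ?thesis
      by (simp only: complex_cnj_cancel_iff)
  qed simp
  then show "X a r = X 0 r / x 0 * x a"
    using \<open>x 0 \<noteq> 0\<close> by (simp add: field_simps)
qed

section \<open>The STFT measurements as Hermitian forms\<close>

definition stft_vec :: "nat \<Rightarrow> nat \<Rightarrow> (nat \<Rightarrow> complex) \<Rightarrow> int \<Rightarrow> nat \<Rightarrow> nat \<Rightarrow> complex" where
  "stft_vec N W w m r j = cnj (wext W w (int r - int j)) * fcol N m j 0"

lemma meas_op_eq_sesq:
  "meas_op N W w m r X = sesq N X (stft_vec N W w m r) (stft_vec N W w m r)"
proof -
  let ?v = "stft_vec N W w m r"
  have col: "mmul N (adj (Wmat W w r)) (fcol N m) i 0 = ?v i" if "i < N" for i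
    using that by (simp add: mmul_def adj_def Wmat_def stft_vec_def if_distrib if_distribR cong: if_cong)
  have outer: "mmul 1 (mmul N (adj (Wmat W w r)) (fcol N m)) (adj (fcol N m)) i k
      = ?v i * cnj (fcol N m k 0)" if "i < N" for i k
    using that col by (simp add: mmul_def adj_def)
  have proj: "mmul N (mmul 1 (mmul N (adj (Wmat W w r)) (fcol N m)) (adj (fcol N m))) (Wmat W w r) i k
      = ?v i * cnj (?v k)" if "i < N" "k < N" for i k
    using that outer by (simp add: mmul_def Wmat_def stft_vec_def if_distrib mult_ac cong: if_cong)
  have "meas_op N W w m r X = (\<Sum>i<N. \<Sum>k<N. ?v i * cnj (?v k) * X k i)"
    unfolding meas_op_def mtrace_def mmul_def[of N _ X] by (intro sum.cong refl) (simp only: lessThan_iff proj)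
  also have "\<dots> = sesq N X ?v ?v"
    unfolding sesq_def by (subst sum.swap) (simp add: mult_ac)
  finally show ?thesis .
qed

lemma Zw_eq_sesq_rank_one:
  "complex_of_real (Zw N W w x m r)
     = sesq N (\<lambda>i j. x i * cnj (x j)) (stft_vec N W w m r) (stft_vec N W w m r)"
  unfolding sesq_rank_one Zw_def
  by (simp add: stft_vec_def fcol_def exp_cnj mult_ac)

lemma stft_vec_eq_0: "r < j \<Longrightarrow> stft_vec N W w m r j = 0"
  by (simp add: stft_vec_def wext_def)

lemma cnj_stft_vec_diag_mult:
  assumes "0 < W"
  shows "cnj (stft_vec N W w m r r) * stft_vec N W w m r r = cnj (w 0) * w 0"
proof -
  have "cnj (exp z) * exp z = 1" if "Re z = 0" for z :: complex
  proof -
    have "cnj z + z = 0" using that by (simp add: complex_eq_iff)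
    then show ?thesis by (simp add: exp_cnj exp_add[symmetric])
  qed
  then show ?thesis
    using assms by (simp add: stft_vec_def wext_def fcol_def mult_ac)
qed

definition border_coeff :: "nat \<Rightarrow> nat \<Rightarrow> (nat \<Rightarrow> complex) \<Rightarrow> (nat \<Rightarrow> complex) \<Rightarrow> int \<Rightarrow> nat \<Rightarrow> complex" where
  "border_coeff N W w x m r = stft_vec N W w m r r * (\<Sum>a<r. cnj (stft_vec N W w m r a) * x a)"

lemma border_equation:
  assumes herm: "\<And>i j. i < N \<Longrightarrow> j < N \<Longrightarrow> X i j = cnj (X j i)" and "r < N" and "0 < W"
    and block: "\<And>a b. a < r \<Longrightarrow> b < r \<Longrightarrow> X a b = x a * cnj (x b)"
    and col: "\<And>a. a < r \<Longrightarrow> X a r = (cnj (x r) + d) * x a"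
    and meas: "meas_op N W w m r X = complex_of_real (Zw N W w x m r)"
  shows "border_coeff N W w x m r * d + cnj (border_coeff N W w x m r * d)
           + cnj (w 0) * w 0 * (X r r - x r * cnj (x r)) = 0"
proof -
  define v where "v = stft_vec N W w m r"
  define D where "D = (\<lambda>i j. X i j - x i * cnj (x j))"
  define P where "P = (\<Sum>a<r. cnj (v a) * x a)"
  have zero: "sesq N D v v = 0"
    using meas by (simp add: D_def v_def sesq_diff meas_op_eq_sesq Zw_eq_sesq_rank_one)
  have border: "sesq N D v v = (\<Sum>a<r. cnj (v a) * D a r) * v r + cnj (v r) * (\<Sum>b<r. D r b * v b)
                                  + cnj (v r) * D r r * v r"
    using \<open>r < N\<close> by (intro sesq_border) (simp_all add: v_def stft_vec_eq_0 D_def block)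
  have column: "(\<Sum>a<r. cnj (v a) * D a r) = d * P"
    unfolding P_def sum_distrib_left by (intro sum.cong refl) (simp add: D_def col algebra_simps)
  have row: "(\<Sum>b<r. D r b * v b) = cnj (d * P)"
    unfolding P_def sum_distrib_left cnj_sum
    using \<open>r < N\<close> by (intro sum.cong refl) (simp add: D_def herm[of r] col algebra_simps)
  have "sesq N D v v = (v r * P) * d + cnj ((v r * P) * d) + (cnj (v r) * v r) * D r r"
    unfolding border column row by (simp add: algebra_simps)
  moreover have "cnj (v r) * v r = cnj (w 0) * w 0"
    unfolding v_def using \<open>0 < W\<close> by (rule cnj_stft_vec_diag_mult)
  moreover have "border_coeff N W w x m r = v r * P"
    by (simp add: border_coeff_def v_def P_def)
  ultimately show ?thesis
    using zero by (simp add: D_def)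
qed

section \<open>Uniqueness for generic signals\<close>

text \<open>For complex a and b, Im (a * cnj b) \<noteq> 0 means that a and b are linearly independent over the reals.\<close>

definition generic_frame :: "nat \<Rightarrow> nat \<Rightarrow> (nat \<Rightarrow> complex) \<Rightarrow> (nat \<Rightarrow> complex) \<Rightarrow> nat \<Rightarrow> bool" where
  "generic_frame N W w x r \<longleftrightarrow>
     Im ((border_coeff N W w x 2 r - border_coeff N W w x 1 r)
         * cnj (border_coeff N W w x 3 r - border_coeff N W w x 1 r)) \<noteq> 0"

lemma rank_one_block_extend:
  assumes psd: "hermitian_psd N X" and "r < N" and "0 < W" and "w 0 \<noteq> 0" and "x 0 \<noteq> 0"
    and block: "\<And>a b. a < r \<Longrightarrow> b < r \<Longrightarrow> X a b = x a * cnj (x b)"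
    and generic: "0 < r \<Longrightarrow> generic_frame N W w x r"
    and meas: "\<And>m. m \<in> {1, 2, 3} \<Longrightarrow> meas_op N W w m r X = complex_of_real (Zw N W w x m r)"
    and "a < Suc r" and "b < Suc r"
  shows "X a b = x a * cnj (x b)"
proof -
  have herm: "\<And>i j. i < N \<Longrightarrow> j < N \<Longrightarrow> X i j = cnj (X j i)"
    using psd unfolding hermitian_psd_iff by blast
  obtain c where col: "\<And>a. a < r \<Longrightarrow> X a r = c * x a"
    using hermitian_psd_column_proportional[OF psd \<open>r < N\<close> \<open>x 0 \<noteq> 0\<close> block] by blast
  define d where "d = c - cnj (x r)"
  define e where "e = X r r - x r * cnj (x r)"
  define h where "h m = border_coeff N W w x m r" for m
  have eq: "h m * d + cnj (h m * d) + cnj (w 0) * w 0 * e = 0" if "m \<in> {1, 2, 3}" for m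
    unfolding h_def e_def
    by (rule border_equation[OF herm \<open>r < N\<close> \<open>0 < W\<close> block _ meas[OF that]]) (simp_all add: col d_def)
  have "Re (h m * d) = - Re (cnj (w 0) * w 0 * e) / 2" if "m \<in> {1, 2, 3}" for m
  proof -
    have "complex_of_real (2 * Re (h m * d)) + cnj (w 0) * w 0 * e = 0"
      using eq[OF that] by (simp only: complex_add_cnj)
    from arg_cong[OF this, of Re] show ?thesis
      by (simp only: plus_complex.sel Re_complex_of_real zero_complex.sel)
  qed
  then have d: "d = 0" if "0 < r"
    using generic[OF that] by (intro eq_0_if_Re_mult_eq_const[of h]) (simp_all add: generic_frame_def h_def)
  have "h 1 * d = 0"
    using d by (cases "r = 0") (simp_all add: h_def border_coeff_def)
  then have e: "e = 0"
    using eq[of 1] \<open>w 0 \<noteq> 0\<close> by auto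
  consider "a < r" "b < r" | "a < r" "b = r" | "a = r" "b < r" | "a = r" "b = r"
    using \<open>a < Suc r\<close> \<open>b < Suc r\<close> by linarith
  then show ?thesis
  proof cases
    case 1
    then show ?thesis by (rule block)
  next
    case 2
    then show ?thesis using col d by (simp add: d_def mult.commute)
  next
    case 3
    then show ?thesis using col d herm[of r b] \<open>r < N\<close> by (simp add: d_def)
  next
    case 4
    then show ?thesis using e by (simp add: e_def)
  qed
qed

lemma rank_one_if_consistent:
  assumes psd: "hermitian_psd N X" and "0 < W" and "w 0 \<noteq> 0" and "x 0 \<noteq> 0"
    and generic: "\<And>r. 0 < r \<Longrightarrow> r < N \<Longrightarrow> generic_frame N W w x r"
    and meas: "\<And>m r. m \<in> {1, 2, 3} \<Longrightarrow> r < N \<Longrightarrow> meas_op N W w m r X = complex_of_real (Zw N W w x m r)"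
    and "i < N" and "j < N"
  shows "X i j = x i * cnj (x j)"
proof -
  have "\<forall>a<r. \<forall>b<r. X a b = x a * cnj (x b)" if "r \<le> N" for r
    using that
  proof (induction r)
    case (Suc r)
    then have "r < N" by simp
    show ?case
      using rank_one_block_extend[OF psd \<open>r < N\<close> \<open>0 < W\<close> \<open>w 0 \<noteq> 0\<close> \<open>x 0 \<noteq> 0\<close> _ _ meas] Suc generic
      by (simp add: \<open>r < N\<close>)
  qed simp
  then show ?thesis
    using \<open>i < N\<close> \<open>j < N\<close> by blast
qed

lemma hermitian_psd_rank_one: "hermitian_psd N (\<lambda>i j. x i * cnj (x j))"
  unfolding hermitian_psd_iff sesq_rank_one by simp

lemma rank_one_iff_consistent:
  assumes "0 < W" and "w 0 \<noteq> 0" and "x 0 \<noteq> 0" and "3 \<le> M"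
    and generic: "\<forall>r\<in>{1..<N}. generic_frame N W w x r"
  shows "(hermitian_psd N X \<and>
          (\<forall>m::int. \<forall>r::nat. 1 \<le> m \<and> m \<le> int M \<and> r < N + W - 1 \<longrightarrow>
             meas_op N W w m r X = complex_of_real (Zw N W w x m r)))
         \<longleftrightarrow> (\<forall>i<N. \<forall>j<N. X i j = x i * cnj (x j))"
proof
  assume "hermitian_psd N X \<and>
          (\<forall>m::int. \<forall>r::nat. 1 \<le> m \<and> m \<le> int M \<and> r < N + W - 1 \<longrightarrow>
             meas_op N W w m r X = complex_of_real (Zw N W w x m r))"
  then show "\<forall>i<N. \<forall>j<N. X i j = x i * cnj (x j)"
    using assms by (intro allI impI rank_one_if_consistent) auto
next
  assume rank_one: "\<forall>i<N. \<forall>j<N. X i j = x i * cnj (x j)"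
  then have "hermitian_psd N X"
    using hermitian_psd_rank_one[of N x] by (simp add: hermitian_psd_iff sesq_cong[of N X])
  moreover have "meas_op N W w m r X = complex_of_real (Zw N W w x m r)" for m r
    using rank_one by (simp add: meas_op_eq_sesq Zw_eq_sesq_rank_one sesq_cong[of N X])
  ultimately show "hermitian_psd N X \<and>
          (\<forall>m::int. \<forall>r::nat. 1 \<le> m \<and> m \<le> int M \<and> r < N + W - 1 \<longrightarrow>
             meas_op N W w m r X = complex_of_real (Zw N W w x m r))"
    by blast
qed

section \<open>Almost every signal is generic\<close>

lemma null_sets_sphere: "sphere (c :: 'a :: euclidean_space) r \<in> null_sets lborel"
  using negligible_sphere[of c r]
  by (auto simp: null_sets_completion_iff negligible_iff_null_sets negligible_convex_frontier)

lemma AE_Im_affine_mult_cnj_neq_0: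
  assumes "Im (a * cnj c) \<noteq> 0"
  shows "AE z in lborel. Im ((a * z + b) * cnj (c * z + d)) \<noteq> 0"
proof -
  define k where "k = Im (a * cnj c)"
  define g1 where "g1 = Im (a * cnj d) + Im (b * cnj c)"
  define g2 where "g2 = Re (a * cnj d) - Re (b * cnj c)"
  define q where "q = Im (b * cnj d)"
  define R where "R = (g1\<^sup>2 + g2\<^sup>2) / (4 * k\<^sup>2) - q / k"
  have "k \<noteq> 0" using assms by (simp add: k_def)
  have "{z \<in> space lborel. \<not> Im ((a * z + b) * cnj (c * z + d)) \<noteq> 0}
          \<subseteq> sphere (Complex (- g1 / (2 * k)) (- g2 / (2 * k))) (sqrt R)"
  proof (rule subsetI)
    fix z assume "z \<in> {z \<in> space lborel. \<not> Im ((a * z + b) * cnj (c * z + d)) \<noteq> 0}"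
    then have "k * ((Re z)\<^sup>2 + (Im z)\<^sup>2) + g1 * Re z + g2 * Im z + q = 0"
      by (simp add: k_def g1_def g2_def q_def algebra_simps power2_eq_square)
    moreover have "(Re z + g1 / (2 * k))\<^sup>2 + (Im z + g2 / (2 * k))\<^sup>2 - R
        = (k * ((Re z)\<^sup>2 + (Im z)\<^sup>2) + g1 * Re z + g2 * Im z + q) / k"
      using \<open>k \<noteq> 0\<close> by (simp add: R_def field_simps power2_eq_square)
    ultimately have "(Re z + g1 / (2 * k))\<^sup>2 + (Im z + g2 / (2 * k))\<^sup>2 = R"
      by simp
    then show "z \<in> sphere (Complex (- g1 / (2 * k)) (- g2 / (2 * k))) (sqrt R)"
      by (simp add: dist_norm cmod_def power2_eq_square algebra_simps)
  qed
  then show ?thesis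
    by (rule AE_I'[OF null_sets_sphere])
qed

lemma AE_PiM_if_AE_coordinate:
  fixes P :: "(nat \<Rightarrow> 'a :: euclidean_space) \<Rightarrow> bool"
  assumes "finite I" and "j \<in> I"
    and meas: "{x \<in> space (PiM I (\<lambda>_. lborel)). \<not> P x} \<in> sets (PiM I (\<lambda>_. lborel))"
    and ae: "\<And>x. AE z in lborel. P (x(j := z))"
  shows "AE x in PiM I (\<lambda>_. lborel). P x"
proof -
  interpret product_sigma_finite "\<lambda>_. lborel :: 'a measure"
    by (simp add: product_sigma_finite_def sigma_finite_lborel)
  define B where "B = {x \<in> space (PiM I (\<lambda>_. lborel)). \<not> P x}"
  have I: "I = insert j (I - {j})" using \<open>j \<in> I\<close> by auto
  have slice: "(\<integral>\<^sup>+ z. indicator B (x(j := z)) \<partial>lborel) = 0" for x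
  proof -
    have "AE z in lborel. indicator B (x(j := z)) = (0 :: ennreal)"
      using ae[of x] by eventually_elim (auto simp: B_def)
    then show ?thesis
      by (simp add: nn_integral_cong_AE)
  qed
  have "emeasure (PiM I (\<lambda>_. lborel)) B = (\<integral>\<^sup>+ x. indicator B x \<partial>PiM I (\<lambda>_. lborel))"
    using meas by (simp add: B_def)
  also have "\<dots> = (\<integral>\<^sup>+ x. (\<integral>\<^sup>+ z. indicator B (x(j := z)) \<partial>lborel) \<partial>PiM (I - {j}) (\<lambda>_. lborel))"
    using \<open>finite I\<close> meas I by (subst I, subst product_nn_integral_insert) (auto simp: B_def)
  also have "\<dots> = 0"
    by (simp add: slice)
  finally show ?thesis
    using AE_iff_measurable[OF meas] by (simp add: B_def)
qed

lemma Im_cis_chord_product_neq_0: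
  assumes "0 < t" and "t < pi"
  shows "Im ((cis (2 * t) - cis t) * cnj (cis (3 * t) - cis t)) \<noteq> 0"
proof -
  have "(cis (2 * t) - cis t) * cnj (cis (3 * t) - cis t) = cis (- t) - cis t - cis (- (2 * t)) + 1"
    by (simp add: cis_cnj cis_mult algebra_simps)
  then have "Im ((cis (2 * t) - cis t) * cnj (cis (3 * t) - cis t)) = sin (2 * t) - 2 * sin t"
    by simp
  also have "\<dots> = 2 * sin t * (cos t - 1)"
    unfolding sin_double by (simp add: algebra_simps)
  finally have "Im ((cis (2 * t) - cis t) * cnj (cis (3 * t) - cis t)) = 2 * sin t * (cos t - 1)" .
  moreover have "sin t > 0"
    using assms by (simp add: sin_gt_zero)
  moreover have "cos t < 1"
    using cos_monotone_0_pi[of 0 t] assms by simp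
  ultimately show ?thesis by simp
qed

lemma stft_vec_diag_mult_cnj_pred:
  assumes "0 < r" and "2 \<le> W" and "0 < N"
  shows "stft_vec N W w m r r * cnj (stft_vec N W w m r (r - 1))
           = cnj (w 0) * w 1 * cis (2 * pi * of_int m / of_nat N)"
proof -
  have "exp (\<i> * 2 * pi * of_int m * of_nat r / of_nat N) * cnj (exp (\<i> * 2 * pi * of_int m * of_nat (r - 1) / of_nat N))
        = cis (2 * pi * of_int m * of_nat r / of_nat N - 2 * pi * of_int m * of_nat (r - 1) / of_nat N)"
    by (simp add: exp_cnj cis_conv_exp exp_add[symmetric] field_simps)
  also have "\<dots> = cis (2 * pi * of_int m / of_nat N)"
    using assms by (simp add: of_nat_diff field_simps)
  finally show ?thesis
    using assms by (simp add: stft_vec_def fcol_def wext_def of_nat_diff mult_ac)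
qed

lemma border_coeff_fun_upd:
  assumes "0 < r"
  shows "border_coeff N W w (x(r - 1 := z)) m r
           = stft_vec N W w m r r * cnj (stft_vec N W w m r (r - 1)) * z + border_coeff N W w (x(r - 1 := 0)) m r"
proof -
  obtain q where "r = Suc q" using assms by (cases r) auto
  then show ?thesis by (simp add: border_coeff_def algebra_simps)
qed

lemma AE_generic_frame_coordinate:
  assumes "0 < r" and "2 \<le> W" and "2 < N" and "w 0 \<noteq> 0" and "w 1 \<noteq> 0"
  shows "AE z in lborel. generic_frame N W w (x(r - 1 := z)) r"
proof -
  define k where "k = cnj (w 0) * w 1"
  define e where "e m = cis (2 * pi * of_int m / of_nat N)" for m :: int
  define b where "b m = border_coeff N W w (x(r - 1 := 0)) m r" for m
  have coeff: "border_coeff N W w (x(r - 1 := z)) m r = k * e m * z + b m" for m z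
    using stft_vec_diag_mult_cnj_pred[OF \<open>0 < r\<close> \<open>2 \<le> W\<close>] \<open>2 < N\<close>
    by (subst border_coeff_fun_upd[OF \<open>0 < r\<close>]) (simp add: k_def e_def b_def)
  have "Im ((e 2 - e 1) * cnj (e 3 - e 1)) \<noteq> 0"
    using Im_cis_chord_product_neq_0[of "2 * pi / N"] \<open>2 < N\<close>
    by (simp add: e_def field_simps)
  moreover have "(k * e 2 - k * e 1) * cnj (k * e 3 - k * e 1) = k * cnj k * ((e 2 - e 1) * cnj (e 3 - e 1))"
    by (simp add: algebra_simps)
  moreover have "k * cnj k = of_real ((cmod k)\<^sup>2)"
    by (simp only: complex_norm_square)
  moreover have "k \<noteq> 0"
    using assms by (simp add: k_def)
  ultimately have "Im ((k * e 2 - k * e 1) * cnj (k * e 3 - k * e 1)) \<noteq> 0"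
    by simp
  from AE_Im_affine_mult_cnj_neq_0[OF this, of "b 2 - b 1" "b 3 - b 1"] show ?thesis
  proof eventually_elim
    case (elim z)
    have "border_coeff N W w (x(r - 1 := z)) m r - border_coeff N W w (x(r - 1 := z)) 1 r
            = (k * e m - k * e 1) * z + (b m - b 1)" for m
      unfolding coeff by (simp add: algebra_simps)
    then show ?case
      using elim by (simp add: generic_frame_def)
  qed
qed

lemma generic_frame_measurable:
  assumes "r \<le> N"
  shows "{x \<in> space (PiM {..<N} (\<lambda>_. lborel)). \<not> generic_frame N W w x r} \<in> sets (PiM {..<N} (\<lambda>_. lborel))"
proof -
  have [measurable]: "(\<lambda>x. border_coeff N W w x m r) \<in> borel_measurable (PiM {..<N} (\<lambda>_. lborel))" for m
  proof -
    have "(\<lambda>x. x a) \<in> borel_measurable (PiM {..<N} (\<lambda>_. lborel :: complex measure))" if "a < r" for a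
      using measurable_component_singleton[of a "{..<N}" "\<lambda>_. lborel :: complex measure"] that assms by simp
    then show ?thesis
      unfolding border_coeff_def by measurable
  qed
  let ?d = "\<lambda>x m. border_coeff N W w x m r - border_coeff N W w x 1 r"
  let ?g = "\<lambda>x. Im (?d x 2) * Re (?d x 3) - Re (?d x 2) * Im (?d x 3)"
  have "?g \<in> borel_measurable (PiM {..<N} (\<lambda>_. lborel))"
    by measurable
  then have "?g -` {0} \<inter> space (PiM {..<N} (\<lambda>_. lborel)) \<in> sets (PiM {..<N} (\<lambda>_. lborel))"
    by (rule measurable_sets) simp
  moreover have "{x \<in> space (PiM {..<N} (\<lambda>_. lborel)). \<not> generic_frame N W w x r}
      = ?g -` {0} \<inter> space (PiM {..<N} (\<lambda>_. lborel))"
    by (auto simp: generic_frame_def algebra_simps)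
  ultimately show ?thesis
    by simp
qed

lemma AE_generic_frames:
  assumes "2 \<le> W" and "2 < N" and "w 0 \<noteq> 0" and "w 1 \<noteq> 0"
  shows "AE x in PiM {..<N} (\<lambda>_. lborel). \<forall>r\<in>{1..<N}. generic_frame N W w x r"
proof (rule AE_finite_allI)
  fix r assume r: "r \<in> {1..<N}"
  show "AE x in PiM {..<N} (\<lambda>_. lborel). generic_frame N W w x r"
    using r assms
    by (intro AE_PiM_if_AE_coordinate[where j = "r - 1"] generic_frame_measurable AE_generic_frame_coordinate) auto
qed simp

theorem theorem3:
  fixes N W M :: nat and w :: "nat \<Rightarrow> complex"
  assumes "0 < N" and "0 < W" and "0 < M"
    and "\<forall>n<W. w n \<noteq> 0"
    and "2 \<le> W" and "2 * W \<le> N"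
    and "4 \<le> M" and "M \<le> N"
  shows "AE x0 in PiM {..<N} (\<lambda>_. (lborel :: complex measure)).
           (\<forall>n<N. x0 n \<noteq> 0) \<longrightarrow>
           (\<forall>X :: nat \<Rightarrow> nat \<Rightarrow> complex.
              (hermitian_psd N X \<and>
               (\<forall>m::int. \<forall>r::nat. 1 \<le> m \<and> m \<le> int M \<and> r < N + W - 1 \<longrightarrow>
                  meas_op N W w m r X = complex_of_real (Zw N W w x0 m r)))
              \<longleftrightarrow> (\<forall>i<N. \<forall>j<N. X i j = x0 i * cnj (x0 j)))"
proof -
  have w: "w 0 \<noteq> 0" "w 1 \<noteq> 0"
    using assms by auto
  have "2 < N"
    using assms by linarith
  then have "AE x0 in PiM {..<N} (\<lambda>_. lborel). \<forall>r\<in>{1..<N}. generic_frame N W w x0 r"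
    using AE_generic_frames[OF \<open>2 \<le> W\<close> _ w] by blast
  then show ?thesis
  proof (rule eventually_mono, intro impI allI)
    fix x0 X assume "\<forall>r\<in>{1..<N}. generic_frame N W w x0 r" and "\<forall>n<N. x0 n \<noteq> 0"
    then show "(hermitian_psd N X \<and>
               (\<forall>m::int. \<forall>r::nat. 1 \<le> m \<and> m \<le> int M \<and> r < N + W - 1 \<longrightarrow>
                  meas_op N W w m r X = complex_of_real (Zw N W w x0 m r)))
              \<longleftrightarrow> (\<forall>i<N. \<forall>j<N. X i j = x0 i * cnj (x0 j))"
      using assms w by (intro rank_one_iff_consistent) auto
  qed
qed

end
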